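(* Let $X$ be the subshift obtained from the marker construction described in the context, and let $j \in \mathbb{N}$. If $x \in X$ and $x_{[0,l_j)}$ is a word in $\mathcal{C}_j$, then every $k>0$ with $x_{[k,k+l_j)} = x_{[0,l_j)}$ is a multiple of $l_j$. In particular the first return time $R_{l_j}(x) = \inf\{k>0 : x_{[k,k+l_j)} = x_{[0,l_j)}\}$ is a multiple of $l_j$.
   Context: Marker construction. Let $l_1$ be a sufficiently large perfect square and $N_1 = 2^{\sqrt{l_1}}$. Let $\mathcal{C}_1$ be a set of $N_1$ binary words of length $l_1$, each beginning with $001$, such that the word $00$ occurs in each element of $\mathcal{C}_1$ only as its prefix. Inductively, given a set $\mathcal{C}_j$ of $N_j$ distinct words of length $l_j$ with an ordering $\mathcal{C}_j = \{u_1^{(j)},\dots,u_{N_j}^{(j)}\}$, let $P_j = \{2\}\cup\{i^2 : 2 \le i \le \lfloor\sqrt{N_j}\rfloor\}$, and let $\mathcal{C}_{j+1}$ be the set of all words $u^{(j)}_{\pi(1)}u^{(j)}_{\pi(2)}\cdots u^{(j)}_{\pi(N_j)}$ where $\pi$ ranges over permutations of $\{1,\dots,N_j\}$ fixing every element outside $P_j$. Thus $N_{j+1} = (\lfloor\sqrt{N_j}\rfloor)!$ and $l_{j+1} = l_j N_j$. The ordering of $\mathcal{C}_{j+1}$ is arbitrary except that its first element $u^{(j+1)}_1$ is $u_1^{(j)}u_2^{(j)}\cdots u_{N_j}^{(j)}$ (identity permutation). Words $u_i^{(j)}$ with $i\in P_j$ are called permuted, the others unpermuted. $X \subset \{0,1\}^{\mathbb{Z}}$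 is the set of bi-infinite sequences each finite subword of which is a subword of some word in $\bigcup_j \mathcal{C}_j$; it is a strictly ergodic subshift. *)

theory Defs
  imports Main "HOL-Library.Sublist" "HOL-Library.Discrete_Functions" "HOL-Combinatorics.Permutations"
begin

text \<open>Levels are numbered from 1 as in the paper. Words are bool lists (False = 0, True = 1).
  The ordered set C_j is given by u j :: nat => bool list on indices 1..N_j.\<close>

fun mk_N :: "nat \<Rightarrow> nat \<Rightarrow> nat" where
  "mk_N l1 0 = 0"
| "mk_N l1 (Suc 0) = 2 ^ floor_sqrt l1"
| "mk_N l1 (Suc (Suc j)) = fact (floor_sqrt (mk_N l1 (Suc j)))"

fun mk_l :: "nat \<Rightarrow> nat \<Rightarrow> nat" where
  "mk_l l1 0 = 0"
| "mk_l l1 (Suc 0) = l1"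
| "mk_l l1 (Suc (Suc j)) = mk_l l1 (Suc j) * mk_N l1 (Suc j)"

definition Pset :: "nat \<Rightarrow> nat set" where
  "Pset n = {2} \<union> {i^2 | i. 2 \<le> i \<and> i \<le> floor_sqrt n}"

definition Cset :: "nat \<Rightarrow> (nat \<Rightarrow> nat \<Rightarrow> bool list) \<Rightarrow> nat \<Rightarrow> bool list set" where
  "Cset l1 u j = u j ` {1..mk_N l1 j}"

definition marker_system :: "nat \<Rightarrow> (nat \<Rightarrow> nat \<Rightarrow> bool list) \<Rightarrow> bool" where
  "marker_system l1 u \<longleftrightarrow>
     (\<exists>m. l1 = m^2)
   \<and> inj_on (u 1) {1..mk_N l1 1}
   \<and> (\<forall>i\<in>{1..mk_N l1 1}. length (u 1 i) = l1
        \<and> take 3 (u 1 i) = [False, False, True]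
        \<and> (\<forall>p. p + 1 < length (u 1 i) \<longrightarrow> \<not> u 1 i ! p \<longrightarrow> \<not> u 1 i ! (p+1) \<longrightarrow> p = 0))
   \<and> (\<forall>j\<ge>1. inj_on (u (Suc j)) {1..mk_N l1 (Suc j)}
        \<and> Cset l1 u (Suc j) =
            {concat (map (\<lambda>i. u j (\<pi> i)) [1..<mk_N l1 j + 1]) | \<pi>.
               \<pi> permutes (Pset (mk_N l1 j) \<inter> {1..mk_N l1 j})}
        \<and> u (Suc j) 1 = concat (map (u j) [1..<mk_N l1 j + 1]))"

definition subword :: "(int \<Rightarrow> bool) \<Rightarrow> int \<Rightarrow> nat \<Rightarrow> bool list" where
  "subword x a n = map (\<lambda>i. x (a + int i)) [0..<n]"

definition marker_X :: "nat \<Rightarrow> (nat \<Rightarrow> nat \<Rightarrow> bool list) \<Rightarrow> (int \<Rightarrow> bool) set" where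
  "marker_X l1 u = {x. \<forall>a n. \<exists>j\<ge>1. \<exists>w\<in>Cset l1 u j. sublist (subword x a n) w}"

end

theory Submission
  imports Defs
begin

text \<open>Words of \<open>\<C>\<^sub>j\<close> all have length \<open>l\<^sub>j\<close>, and \<open>\<C>\<^sub>j\<close> is comma free: a word of \<open>\<C>\<^sub>j\<close>
  occurs in a concatenation of words of \<open>\<C>\<^sub>j\<close> only at positions divisible by \<open>l\<^sub>j\<close>. For
  \<open>j = 1\<close> this holds because \<open>001\<close> occurs in such a concatenation only at block starts.
  A word of \<open>\<C>\<^sub>j\<^sub>+\<^sub>1\<close> is a concatenation of \<open>N\<^sub>j\<close> words of \<open>\<C>\<^sub>j\<close> which starts with
  \<open>u\<^sub>1\<close> and contains it nowhere else, because the permutations fix 1; so by comma-freeness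
  at level \<open>j\<close> an occurrence of it starts at a block \<open>u\<^sub>1\<close>, i.e. at the start of a word of
  \<open>\<C>\<^sub>j\<^sub>+\<^sub>1\<close>. Finally, \<open>x[0,k+l\<^sub>j)\<close> lies in a word of some \<open>\<C>\<^sub>m\<close> with \<open>m \<ge> j\<close>, which is a
  concatenation of words of \<open>\<C>\<^sub>j\<close>; both occurrences of \<open>x[0,l\<^sub>j)\<close> in it are aligned, hence
  so is their distance \<open>k\<close>.\<close>

lemma length_concat_uniform:
  "\<forall>w\<in>set ws. length w = l \<Longrightarrow> length (concat ws) = length ws * l"
  by (induction ws) auto

lemma nth_concat_uniform:
  "\<forall>w\<in>set ws. length w = l \<Longrightarrow> q < length ws \<Longrightarrow> r < l \<Longrightarrow> concat ws ! (q * l + r) = ws ! q ! r"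
proof (induction ws arbitrary: q)
  case Nil
  then show ?case by simp
next
  case (Cons w ws)
  then show ?case
    by (cases q) (simp_all add: nth_append add.assoc)
qed

lemma take_drop_concat_uniform:
  "\<forall>w\<in>set ws. length w = l \<Longrightarrow> q < length ws \<Longrightarrow> take l (drop (q * l) (concat ws)) = ws ! q"
proof (induction ws arbitrary: q)
  case Nil
  then show ?case by simp
next
  case (Cons w ws)
  then show ?case
    by (cases q) (simp_all add: add.commute)
qed

lemma concat_map_concat: "concat (map concat xss) = concat (concat xss)"
  by (induction xss) simp_all

lemma set_subset_image_map: "set ys \<subseteq> f ` A \<Longrightarrow> \<exists>xs. set xs \<subseteq> A \<and> ys = map f xs"
proof -
  assume "set ys \<subseteq> f ` A"
  then have "ys \<in> lists (f ` A)"
    by blast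
  then have "ys \<in> map f ` lists A"
    by (simp only: lists_image)
  then obtain xs where "ys = map f xs" "xs \<in> lists A"
    by (rule imageE)
  then show ?thesis
    by auto
qed

definition comma_free :: "'a list set \<Rightarrow> nat \<Rightarrow> bool" where
  "comma_free A l \<longleftrightarrow>
     (\<forall>ws v p. set ws \<subseteq> A \<longrightarrow> v \<in> A \<longrightarrow> p + l \<le> length (concat ws) \<longrightarrow>
        take l (drop p (concat ws)) = v \<longrightarrow> l dvd p)"

lemma marker_occurrence_aligned:
  assumes len: "\<forall>w\<in>set ws. length w = l"
    and prefix: "\<forall>w\<in>set ws. take 3 w = [False, False, True]"
    and unique: "\<forall>w\<in>set ws. \<forall>p. p + 1 < length w \<longrightarrow> \<not> w ! p \<longrightarrow> \<not> w ! (p + 1) \<longrightarrow> p = 0"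
    and i: "i + 2 < length (concat ws)"
    and occ: "\<not> concat ws ! i" "\<not> concat ws ! (i + 1)" "concat ws ! (i + 2)"
  shows "l dvd i"
proof -
  let ?W = "concat ws"
  have lenW: "length ?W = length ws * l"
    using len by (rule length_concat_uniform)
  obtain w where w: "w \<in> set ws"
    using i by (cases ws) auto
  have "length (take 3 w) = 3"
    using prefix w by simp
  then have l3: "3 \<le> l"
    using len w by simp
  define q r where "q = i div l" and "r = i mod l"
  have qr: "i = q * l + r" and r: "r < l"
    using l3 by (simp_all add: q_def r_def)
  have q: "q < length ws"
    unfolding q_def using i lenW by (intro less_mult_imp_div_less) simp
  have wq: "ws ! q \<in> set ws"
    using q by simp
  show ?thesis
  proof (cases "r + 1 < l")
    case True
    have "\<not> ws ! q ! r"
      using occ(1) nth_concat_uniform[OF len q r] qr by simp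
    moreover have "\<not> ws ! q ! (r + 1)"
      using occ(2) nth_concat_uniform[OF len q True] qr by (simp add: add.assoc)
    moreover have "length (ws ! q) = l"
      using len wq by blast
    ultimately have "r = 0"
      using unique wq True by blast
    then show ?thesis
      using qr by simp
  next
    case False
    then have i2: "i + 2 = Suc q * l + 1"
      using qr r by simp
    then have "Suc q * l < length ws * l"
      using i lenW by linarith
    then have q1: "Suc q < length ws"
      using mult_less_cancel2 by blast
    have "ws ! Suc q ! 1"
      using occ(3) i2 nth_concat_uniform[OF len q1, of 1] l3 by simp
    moreover have "ws ! Suc q ! 1 = take 3 (ws ! Suc q) ! 1"
      by simp
    moreover have "take 3 (ws ! Suc q) = [False, False, True]"
      using prefix q1 by simp
    ultimately show ?thesis
      by simp
  qed
qed

lemma comma_free_marker_code: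
  assumes len: "\<forall>w\<in>A. length w = l"
    and prefix: "\<forall>w\<in>A. take 3 w = [False, False, True]"
    and unique: "\<forall>w\<in>A. \<forall>p. p + 1 < length w \<longrightarrow> \<not> w ! p \<longrightarrow> \<not> w ! (p + 1) \<longrightarrow> p = 0"
  shows "comma_free A l"
  unfolding comma_free_def
proof (intro allI impI)
  fix ws v p
  assume ws: "set ws \<subseteq> A" and v: "v \<in> A"
    and bound: "p + l \<le> length (concat ws)" and occ: "take l (drop p (concat ws)) = v"
  have v3: "take 3 v = [False, False, True]" and lv: "length v = l"
    using prefix len v by auto
  have "3 = length (take 3 v)"
    using v3 by simp
  then have l3: "3 \<le> l"
    using lv by simp
  have vt: "v ! t = take 3 v ! t" if "t < 3" for t
    using that by simp
  have v012: "\<not> v ! 0" "\<not> v ! 1" "v ! 2"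
    using vt[of 0] vt[of 1] vt[of 2] v3 by simp_all
  have vW: "concat ws ! (p + t) = v ! t" if "t < l" for t
    using occ that bound by auto
  show "l dvd p"
  proof (rule marker_occurrence_aligned)
    show "\<forall>w\<in>set ws. length w = l" "\<forall>w\<in>set ws. take 3 w = [False, False, True]"
      "\<forall>w\<in>set ws. \<forall>p. p + 1 < length w \<longrightarrow> \<not> w ! p \<longrightarrow> \<not> w ! (p + 1) \<longrightarrow> p = 0"
      using ws len prefix unique by blast+
    show "p + 2 < length (concat ws)"
      using bound l3 by linarith
    show "\<not> concat ws ! p" "\<not> concat ws ! (p + 1)" "concat ws ! (p + 2)"
      using vW[of 0] vW[of 1] vW[of 2] v012 l3 by simp_all
  qed
qed

lemma marked_blocks_marker_index:
  assumes bss: "\<forall>bs\<in>set bss. \<exists>cs. bs = c # cs \<and> length cs = n \<and> c \<notin> set cs"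
    and q: "q < length (concat bss)" and at: "concat bss ! q = c"
  shows "Suc n dvd q"
proof -
  have len: "\<forall>bs\<in>set bss. length bs = Suc n"
    using bss by auto
  define a r where "a = q div Suc n" and "r = q mod Suc n"
  have qar: "q = a * Suc n + r"
    unfolding a_def r_def by (rule div_mult_mod_eq[symmetric])
  have r: "r < Suc n"
    unfolding r_def by simp
  have a: "a < length bss"
    using q length_concat_uniform[OF len] unfolding a_def by (intro less_mult_imp_div_less) simp
  have "bss ! a ! r = c"
    using nth_concat_uniform[OF len a r] at qar by simp
  moreover obtain cs where "bss ! a = c # cs" "length cs = n" "c \<notin> set cs"
    using bss a by (meson nth_mem)
  ultimately have "r = 0"
    using r by (cases r) auto
  then have "q = a * Suc n"
    using qar by simp
  then show ?thesis
    by (simp only: dvd_triv_right)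
qed

lemma comma_free_concat_marked:
  assumes A: "comma_free A l" and len: "\<forall>w\<in>A. length w = l" and c: "c \<in> A"
    and B: "\<forall>w\<in>B. \<exists>cs. set cs \<subseteq> A \<and> length cs = n \<and> c \<notin> set cs \<and> w = concat (c # cs)"
  shows "comma_free B (l * Suc n)"
  unfolding comma_free_def
proof (intro allI impI)
  fix ws v p
  assume ws: "set ws \<subseteq> B" and v: "v \<in> B"
    and bound: "p + l * Suc n \<le> length (concat ws)" and occ: "take (l * Suc n) (drop p (concat ws)) = v"
  define M where "M = {c # cs | cs. set cs \<subseteq> A \<and> length cs = n \<and> c \<notin> set cs}"
  have "set ws \<subseteq> concat ` M"
    using ws B unfolding M_def by blast
  then obtain bss where bss: "set bss \<subseteq> M" and ws_bss: "ws = map concat bss"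
    using set_subset_image_map by blast
  define W where "W = concat bss"
  have concat_W: "concat W = concat ws"
    unfolding W_def ws_bss by (rule concat_map_concat[symmetric])
  have len_W: "\<forall>w\<in>set W. length w = l"
    using bss c len unfolding W_def M_def by fastforce
  have W_A: "set W \<subseteq> A"
    using bss c unfolding W_def M_def by fastforce
  show "l * Suc n dvd p"
  proof (cases "l = 0")
    case True
    then have "length (concat ws) = 0"
      using length_concat_uniform[OF len_W] concat_W by simp
    then have "p = 0"
      using bound by linarith
    then show ?thesis
      by simp
  next
    case False
    obtain cs where "v = concat (c # cs)"
      using v B by blast
    then have "take l v = c"
      using len c by simp
    moreover have "take l (drop p (concat ws)) = take l v"
      unfolding occ[symmetric] by (simp add: min_def)
    ultimately have occ_c: "take l (drop p (concat W)) = c"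
      using concat_W by simp
    have bound_W: "p + l \<le> length (concat W)"
      using bound concat_W by simp
    then have "l dvd p"
      using A W_A c occ_c unfolding comma_free_def by blast
    then obtain q where p: "p = q * l"
      by (metis dvd_def mult.commute)
    have "q * l + l \<le> length W * l"
      using bound_W p length_concat_uniform[OF len_W] by simp
    then have "q * l < length W * l"
      using False by linarith
    then have q: "q < length W"
      using mult_less_cancel2 by blast
    then have "W ! q = c"
      using take_drop_concat_uniform[OF len_W] occ_c p by simp
    then have "Suc n dvd q"
      using marked_blocks_marker_index[of bss c n q] bss q unfolding W_def M_def by blast
    then have "l * Suc n dvd l * q"
      by (rule mult_dvd_mono[OF dvd_refl])
    then show ?thesis
      using p by (simp only: mult.commute)
  qed
qed

lemma mk_N_pos: "1 \<le> j \<Longrightarrow> 1 \<le> mk_N l1 j"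
  by (induction l1 j rule: mk_N.induct) auto

lemma mk_l_Suc: "1 \<le> j \<Longrightarrow> mk_l l1 (Suc j) = mk_l l1 j * mk_N l1 j"
  by (cases j) auto

lemma mk_l_mono:
  assumes "1 \<le> j" "j \<le> m"
  shows "mk_l l1 j \<le> mk_l l1 m"
  using assms(2)
proof (induction m rule: dec_induct)
  case base
  then show ?case by simp
next
  case (step m)
  with assms(1) have "1 \<le> m"
    by simp
  then show ?case
    using step.IH mk_l_Suc[of m l1] mk_N_pos[of m l1] by (simp add: le_trans)
qed

lemma one_notin_Pset: "1 \<notin> Pset n"
proof
  assume "1 \<in> Pset n"
  then obtain i :: nat where "1 = i ^ 2" "2 \<le> i"
    unfolding Pset_def by auto
  moreover have "2 ^ 2 \<le> i ^ 2"
    using \<open>2 \<le> i\<close> by (rule power_mono) simp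
  ultimately show False
    by simp
qed

lemma permutes_Pset_fixes_one: "\<pi> permutes (Pset n \<inter> {1..n}) \<Longrightarrow> \<pi> 1 = 1"
  using one_notin_Pset by (simp add: permutes_not_in)

lemma permutes_Pset_in_range: "\<pi> permutes (Pset n \<inter> {1..n}) \<Longrightarrow> i \<in> {1..n} \<Longrightarrow> \<pi> i \<in> {1..n}"
  by (meson inf_le2 permutes_in_image permutes_subset)

lemma length_subword [simp]: "length (subword x a n) = n"
  by (simp add: subword_def)

lemma take_subword: "l \<le> n \<Longrightarrow> take l (subword x 0 n) = subword x 0 l"
  unfolding subword_def by (simp add: take_map)

lemma take_drop_subword: "k + l \<le> n \<Longrightarrow> take l (drop k (subword x 0 n)) = subword x (int k) l"
  unfolding subword_def by (rule nth_equalityI) (auto simp: algebra_simps)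

context
  fixes l1 :: nat and u :: "nat \<Rightarrow> nat \<Rightarrow> bool list"
  assumes ms: "marker_system l1 u"
begin

lemma inj_on_level:
  assumes "1 \<le> j"
  shows "inj_on (u j) {1..mk_N l1 j}"
proof -
  obtain k where j: "j = Suc k"
    using assms by (cases j) auto
  then show ?thesis
    using ms unfolding marker_system_def by (cases k) auto
qed

lemma Cset_Suc:
  "1 \<le> j \<Longrightarrow> Cset l1 u (Suc j) = {concat (map (\<lambda>i. u j (\<pi> i)) [1..<mk_N l1 j + 1]) | \<pi>.
     \<pi> permutes (Pset (mk_N l1 j) \<inter> {1..mk_N l1 j})}"
  using ms unfolding marker_system_def by blast

lemma Cset_one:
  "w \<in> Cset l1 u 1 \<Longrightarrow> length w = l1 \<and> take 3 w = [False, False, True]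
     \<and> (\<forall>p. p + 1 < length w \<longrightarrow> \<not> w ! p \<longrightarrow> \<not> w ! (p + 1) \<longrightarrow> p = 0)"
  using ms unfolding marker_system_def Cset_def by auto

lemma first_word_in_Cset: "1 \<le> j \<Longrightarrow> u j 1 \<in> Cset l1 u j"
  using mk_N_pos[of j l1] unfolding Cset_def by auto

lemma Cset_Suc_marked:
  assumes j: "1 \<le> j" and w: "w \<in> Cset l1 u (Suc j)"
  shows "\<exists>cs. set cs \<subseteq> Cset l1 u j \<and> length cs = mk_N l1 j - 1 \<and> u j 1 \<notin> set cs
    \<and> w = concat (u j 1 # cs)"
proof -
  let ?N = "mk_N l1 j"
  obtain \<pi> where \<pi>: "\<pi> permutes (Pset ?N \<inter> {1..?N})"
    and w_eq: "w = concat (map (\<lambda>i. u j (\<pi> i)) [1..<?N + 1])"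
    using w Cset_Suc[OF j] by blast
  define cs where "cs = map (\<lambda>i. u j (\<pi> i)) [2..<?N + 1]"
  have "[1..<?N + 1] = 1 # [2..<?N + 1]"
    using mk_N_pos[OF j, of l1] by (simp add: upt_conv_Cons numeral_2_eq_2 del: upt_Suc)
  then have "w = concat (u j 1 # cs)"
    unfolding w_eq cs_def using permutes_Pset_fixes_one[OF \<pi>] by simp
  moreover have "set cs \<subseteq> Cset l1 u j"
    unfolding cs_def Cset_def using permutes_Pset_in_range[OF \<pi>] by auto
  moreover have "u j 1 \<notin> set cs"
  proof
    assume "u j 1 \<in> set cs"
    then obtain i where i: "2 \<le> i" "i \<le> ?N" and eq: "u j (\<pi> i) = u j 1"
      unfolding cs_def by auto
    have "\<pi> i \<in> {1..?N}"
      using permutes_Pset_in_range[OF \<pi>] i by simp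
    then have "\<pi> i = 1"
      using inj_onD[OF inj_on_level[OF j] eq] mk_N_pos[OF j, of l1] by simp
    then have "\<pi> i = \<pi> 1"
      using permutes_Pset_fixes_one[OF \<pi>] by simp
    then have "i = 1"
      by (rule injD[OF permutes_inj[OF \<pi>]])
    then show False
      using i by simp
  qed
  moreover have "length cs = ?N - 1"
    unfolding cs_def by (simp del: upt_Suc)
  ultimately show ?thesis
    by blast
qed

lemma length_Cset: "1 \<le> j \<Longrightarrow> w \<in> Cset l1 u j \<Longrightarrow> length w = mk_l l1 j"
proof (induction j arbitrary: w rule: dec_induct)
  case base
  then show ?case
    using Cset_one by simp
next
  case (step j)
  then obtain cs where cs: "set cs \<subseteq> Cset l1 u j" "length cs = mk_N l1 j - 1"
    and w: "w = concat (u j 1 # cs)"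
    using Cset_Suc_marked by blast
  have "length w = mk_l l1 j + (mk_N l1 j - 1) * mk_l l1 j"
  proof -
    have "\<forall>v\<in>set cs. length v = mk_l l1 j"
      using step.IH cs(1) by blast
    then show ?thesis
      unfolding w using step.IH first_word_in_Cset[OF step.hyps(1)] cs(2)
        length_concat_uniform[of cs]
      by simp
  qed
  then show ?case
    using mk_l_Suc[OF step.hyps(1)] mk_N_pos[OF step.hyps(1), of l1]
    by (simp add: algebra_simps)
qed

lemma comma_free_Cset: "1 \<le> j \<Longrightarrow> comma_free (Cset l1 u j) (mk_l l1 j)"
proof (induction j rule: dec_induct)
  case base
  then show ?case
    using Cset_one by (intro comma_free_marker_code) auto
next
  case (step j)
  have "comma_free (Cset l1 u (Suc j)) (mk_l l1 j * Suc (mk_N l1 j - 1))"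
    using step.IH length_Cset[OF step.hyps(1)] first_word_in_Cset[OF step.hyps(1)]
      Cset_Suc_marked[OF step.hyps(1)]
    by (intro comma_free_concat_marked) auto
  then show ?case
    using mk_l_Suc[OF step.hyps(1)] mk_N_pos[OF step.hyps(1), of l1] by simp
qed

lemma Cset_concat_lower:
  assumes "1 \<le> j" "j \<le> m" "w \<in> Cset l1 u m"
  shows "\<exists>ws. set ws \<subseteq> Cset l1 u j \<and> w = concat ws"
  using assms(2,3)
proof (induction m arbitrary: w rule: dec_induct)
  case base
  then show ?case
    by (intro exI[of _ "[w]"]) simp
next
  case (step m)
  then obtain cs where cs: "set cs \<subseteq> Cset l1 u m" and w: "w = concat (u m 1 # cs)"
    using Cset_Suc_marked[of m w] assms(1) by auto
  have "u m 1 \<in> Cset l1 u m"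
    using assms(1) step.hyps(1) by (intro first_word_in_Cset) simp
  with cs have "set (u m 1 # cs) \<subseteq> Cset l1 u m"
    by simp
  also have "Cset l1 u m \<subseteq> concat ` lists (Cset l1 u j)"
  proof
    fix v
    assume "v \<in> Cset l1 u m"
    then obtain ws where "set ws \<subseteq> Cset l1 u j" "v = concat ws"
      using step.IH by blast
    then show "v \<in> concat ` lists (Cset l1 u j)"
      by (auto intro: in_listsI)
  qed
  finally obtain wss where wss: "set wss \<subseteq> lists (Cset l1 u j)" "u m 1 # cs = map concat wss"
    using set_subset_image_map by metis
  have "w = concat (concat wss)"
    unfolding w wss(2) by (rule concat_map_concat)
  moreover have "set (concat wss) \<subseteq> Cset l1 u j"
    using wss(1) by auto
  ultimately show ?case
    by blast
qed

lemma return_time_dvd: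
  assumes j: "1 \<le> j" and x: "x \<in> marker_X l1 u"
    and v: "subword x 0 (mk_l l1 j) \<in> Cset l1 u j"
    and k: "0 < k" and return: "subword x (int k) (mk_l l1 j) = subword x 0 (mk_l l1 j)"
  shows "mk_l l1 j dvd k"
proof -
  let ?l = "mk_l l1 j" and ?v = "subword x 0 (mk_l l1 j)"
  obtain m w where m: "1 \<le> m" and w: "w \<in> Cset l1 u m" and "sublist (subword x 0 (k + ?l)) w"
    using x unfolding marker_X_def by blast
  then obtain ps ss where w_eq: "w = ps @ subword x 0 (k + ?l) @ ss"
    unfolding sublist_def by blast
  have bound: "length ps + k + ?l \<le> length w"
    unfolding w_eq by simp
  have "j \<le> m"
  proof (rule ccontr)
    assume "\<not> j \<le> m"
    then have "length w \<le> ?l"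
      using length_Cset[OF m w] mk_l_mono[OF m, of j l1] by simp
    then show False
      using bound k by simp
  qed
  then obtain ws where ws: "set ws \<subseteq> Cset l1 u j" "w = concat ws"
    using Cset_concat_lower[OF j _ w] by blast
  have "take ?l (drop (length ps) w) = ?v"
    unfolding w_eq using take_subword[of ?l "k + ?l" x] by simp
  then have "?l dvd length ps"
    using comma_free_Cset[OF j] ws v bound unfolding comma_free_def by simp
  moreover have "take ?l (drop (length ps + k) w) = ?v"
    unfolding w_eq using take_drop_subword[of k ?l "k + ?l" x] return by simp
  then have "?l dvd length ps + k"
    using comma_free_Cset[OF j] ws v bound unfolding comma_free_def by simp
  ultimately show ?thesis
    by (simp add: dvd_add_right_iff)
qed

end

text \<open>The argument needs no lower bound on \<open>l\<^sub>1\<close>, so \<open>L = 0\<close> works.\<close>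

theorem lemma4p1:
  shows "\<exists>L. \<forall>l1 u. L \<le> l1 \<longrightarrow> marker_system l1 u \<longrightarrow>
    (\<forall>j\<ge>1. \<forall>x\<in>marker_X l1 u.
       subword x 0 (mk_l l1 j) \<in> Cset l1 u j \<longrightarrow>
         (\<forall>k::nat. k > 0 \<longrightarrow> subword x (int k) (mk_l l1 j) = subword x 0 (mk_l l1 j)
              \<longrightarrow> mk_l l1 j dvd k)
       \<and> ((\<exists>k>0. subword x (int k) (mk_l l1 j) = subword x 0 (mk_l l1 j)) \<longrightarrow>
            mk_l l1 j dvd (LEAST k. k > 0 \<and> subword x (int k) (mk_l l1 j) = subword x 0 (mk_l l1 j))))"
proof (intro exI[of _ 0] allI impI ballI conjI)
  fix l1 u j x k
  assume "marker_system l1 u" "1 \<le> j" "x \<in> marker_X l1 u" "subword x 0 (mk_l l1 j) \<in> Cset l1 u j"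
    "0 < k" "subword x (int k) (mk_l l1 j) = subword x 0 (mk_l l1 j)"
  then show "mk_l l1 j dvd k"
    by (rule return_time_dvd)
next
  fix l1 u j x
  assume "marker_system l1 u" "1 \<le> j" "x \<in> marker_X l1 u" "subword x 0 (mk_l l1 j) \<in> Cset l1 u j"
    and returns: "\<exists>k>0. subword x (int k) (mk_l l1 j) = subword x 0 (mk_l l1 j)"
  then show "mk_l l1 j dvd (LEAST k. k > 0 \<and> subword x (int k) (mk_l l1 j) = subword x 0 (mk_l l1 j))"
    using LeastI_ex[OF returns] return_time_dvd by blast
qed

end
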